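(* For every integer $k\ge1$ there is a constant $C>0$ such that for every $r\ge1$ and every non-negative $C^2$ function $u$ on the disk $D_r=\{z\in\mathbb C:|z|<r\}$ satisfying $\Delta u=2(e^u-e^{(1-k)u})$, one has $u(0)\le C/r^2$.
   Context: $\Delta=\partial_x^2+\partial_y^2$ is the Euclidean Laplacian. *)

theory Defs
  imports "HOL-Analysis.Analysis"
begin

text \<open>Functions on the plane are modelled as functions on complex numbers.
  dirderiv v u z is the derivative of u at z in the (real) direction v;
  partial derivatives are dirderiv 1 (d/dx) and dirderiv i (d/dy).\<close>

definition dirderiv :: "complex \<Rightarrow> (complex \<Rightarrow> real) \<Rightarrow> complex \<Rightarrow> real" where
  "dirderiv v u z = deriv (\<lambda>t::real. u (z + of_real t * v)) 0"

definition C2_on :: "complex set \<Rightarrow> (complex \<Rightarrow> real) \<Rightarrow> bool" where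
  "C2_on S u \<longleftrightarrow>
     continuous_on S u \<and>
     (\<forall>v\<in>{1, \<i>}. (\<forall>z\<in>S. (\<lambda>t::real. u (z + of_real t * v)) differentiable (at 0))
        \<and> continuous_on S (dirderiv v u)) \<and>
     (\<forall>v\<in>{1, \<i>}. \<forall>w\<in>{1, \<i>}.
        (\<forall>z\<in>S. (\<lambda>t::real. dirderiv v u (z + of_real t * w)) differentiable (at 0))
        \<and> continuous_on S (dirderiv w (dirderiv v u)))"

definition laplacian :: "(complex \<Rightarrow> real) \<Rightarrow> complex \<Rightarrow> real" where
  "laplacian u z = dirderiv 1 (dirderiv 1 u) z + dirderiv \<i> (dirderiv \<i> u) z"

end

theory Submission
  imports Defs
begin

text \<open>Since \<open>exp ((1 - k) u) \<le> 1\<close> and \<open>exp u \<ge> 1 + u + u\<^sup>2/2\<close> for \<open>u \<ge> 0\<close>, a solution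
  satisfies \<open>\<Delta>u \<ge> u\<^sup>2\<close> wherever \<open>u > 0\<close>. On the disk of radius \<open>R\<close> the barrier
  \<open>W = 24R\<^sup>2/(R\<^sup>2 - |z|\<^sup>2)\<^sup>2\<close> satisfies \<open>\<Delta>W \<le> W\<^sup>2\<close> and blows up at the boundary, so
  \<open>u - W\<close> attains its maximum at an interior point. If \<open>u(0) > W(0) = 24/R\<^sup>2\<close>, then at that
  point \<open>u > W > 0\<close> and, comparing second derivatives along the coordinate lines,
  \<open>u\<^sup>2 \<le> \<Delta>u \<le> \<Delta>W \<le> W\<^sup>2 < u\<^sup>2\<close>. Hence \<open>u(0) \<le> 24/R\<^sup>2\<close> for all \<open>R < r\<close>, and so
  \<open>u(0) \<le> 24/r\<^sup>2\<close>.\<close>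

lemma deriv2_nonpos_at_local_max:
  fixes f f' :: "real \<Rightarrow> real"
  assumes "0 < \<delta>"
    and f': "\<And>t. \<bar>t - x\<bar> < \<delta> \<Longrightarrow> (f has_real_derivative f' t) (at t)"
    and f'': "(f' has_real_derivative D) (at x)"
    and max: "\<And>t. \<bar>t - x\<bar> < \<delta> \<Longrightarrow> f t \<le> f x"
  shows "D \<le> 0"
proof (rule ccontr)
  assume "\<not> D \<le> 0"
  have "(f has_real_derivative f' x) (at x)"
    using f' \<open>0 < \<delta>\<close> by simp
  then have "f' x = 0"
    by (rule DERIV_local_max[OF _ \<open>0 < \<delta>\<close>]) (simp add: max abs_minus_commute)
  moreover obtain e where "e > 0" and inc: "\<And>h. 0 < h \<Longrightarrow> h < e \<Longrightarrow> f' x < f' (x + h)"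
    using DERIV_pos_inc_right[OF f''] \<open>\<not> D \<le> 0\<close> by force
  define t where "t = x + min e \<delta> / 2"
  have t: "x < t" "t < x + e" "\<bar>t - x\<bar> < \<delta>"
    using \<open>e > 0\<close> \<open>0 < \<delta>\<close> by (auto simp: t_def)
  obtain \<xi> where \<xi>: "x < \<xi>" "\<xi> < t" "f t - f x = (t - x) * f' \<xi>"
    using MVT2[of x t f f'] f' t by force
  ultimately have "0 < (t - x) * f' \<xi>"
    using inc[of "\<xi> - x"] t by simp
  then have "f x < f t"
    using \<xi>(3) by simp
  with max[OF t(3)] show False by simp
qed

lemma continuous_attains_sup_ball:
  fixes f :: "'a::heine_borel \<Rightarrow> real"
  assumes "continuous_on (cball c \<rho>) f" "0 \<le> \<rho>"
    and outside: "\<And>z. z \<in> ball c R \<Longrightarrow> \<rho> < dist c z \<Longrightarrow> f z \<le> f c"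
  obtains z0 where "z0 \<in> cball c \<rho>" "\<And>z. z \<in> ball c R \<Longrightarrow> f z \<le> f z0"
proof -
  obtain z0 where z0: "z0 \<in> cball c \<rho>" "\<And>z. z \<in> cball c \<rho> \<Longrightarrow> f z \<le> f z0"
    using continuous_attains_sup[OF compact_cball _ assms(1)] \<open>0 \<le> \<rho>\<close> by auto
  have "f z \<le> f z0" if "z \<in> ball c R" for z
  proof (cases "dist c z \<le> \<rho>")
    case True
    then show ?thesis
      using z0(2) by simp
  next
    case False
    then have "f z \<le> f c"
      using outside[OF that] by simp
    also have "\<dots> \<le> f z0"
      using z0(2) \<open>0 \<le> \<rho>\<close> by simp
    finally show ?thesis .
  qed
  with z0(1) show ?thesis using that by blast
qed

lemma DERIV_const_divide_square:
  fixes q :: "real \<Rightarrow> real"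
  assumes "(q has_real_derivative q') (at t)" "q t \<noteq> 0"
  shows "((\<lambda>s. A / (q s)\<^sup>2) has_real_derivative -2 * A * q' / (q t) ^ 3) (at t)"
  using assms by (auto intro!: derivative_eq_intros simp: field_simps eval_nat_numeral)

lemma DERIV_divide_cube:
  fixes p q :: "real \<Rightarrow> real"
  assumes "(p has_real_derivative p') (at t)" "(q has_real_derivative q') (at t)" "q t \<noteq> 0"
  shows "((\<lambda>s. p s / (q s) ^ 3) has_real_derivative (p' * q t - 3 * p t * q') / (q t) ^ 4) (at t)"
  using assms by (auto intro!: derivative_eq_intros simp: field_simps eval_nat_numeral)

lemma norm_add_scaled_unit_square:
  fixes z v :: complex
  assumes "norm v = 1"
  shows "(norm (z + of_real t * v))\<^sup>2 = (norm z)\<^sup>2 + 2 * t * (z \<bullet> v) + t\<^sup>2"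
proof -
  have v: "(Re v)\<^sup>2 + (Im v)\<^sup>2 = 1"
    using assms by (simp add: cmod_power2[symmetric])
  have "(norm (z + of_real t * v))\<^sup>2 = (norm z)\<^sup>2 + 2 * t * (z \<bullet> v) + t\<^sup>2 * ((Re v)\<^sup>2 + (Im v)\<^sup>2)"
    unfolding cmod_power2 inner_complex_def by (simp add: power2_eq_square algebra_simps)
  then show ?thesis
    using v by simp
qed

lemma norm_less_imp_square_diff_pos:
  fixes z :: "'a::real_normed_vector"
  assumes "norm z < R"
  shows "0 < R\<^sup>2 - (norm z)\<^sup>2"
  using assms power_strict_mono[of "norm z" R 2] by simp

lemma square_le_exp_diff:
  fixes U c :: real
  assumes "0 \<le> U" "c \<le> 0"
  shows "U\<^sup>2 \<le> 2 * (exp U - exp (c * U))"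
proof -
  have "U\<^sup>2 \<le> 2 * (exp U - 1)"
    using exp_lower_Taylor_quadratic[OF \<open>0 \<le> U\<close>] \<open>0 \<le> U\<close> by (simp add: field_simps)
  also have "\<dots> \<le> 2 * (exp U - exp (c * U))"
    using assms by (simp add: mult_nonpos_nonneg)
  finally show ?thesis .
qed

lemma dirderiv_has_real_derivative_line:
  assumes "(\<lambda>s. u (z + of_real t * v + of_real s * v)) differentiable (at 0)"
  shows "((\<lambda>s. u (z + of_real s * v)) has_real_derivative dirderiv v u (z + of_real t * v)) (at t)"
proof -
  have shift: "(\<lambda>s. u (z + of_real t * v + of_real s * v)) = (\<lambda>s. u (z + of_real (s + t) * v))"
    by (simp add: algebra_simps)
  show ?thesis
    using assms DERIV_shift[of "\<lambda>s. u (z + of_real s * v)" _ 0 t]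
    unfolding dirderiv_def shift by (simp add: DERIV_deriv_iff_real_differentiable)
qed

lemma C2_on_dirderiv2_le_at_local_max:
  assumes u: "C2_on S u" and v: "v \<in> {1, \<i>}" and "0 < \<delta>" and ball: "ball z \<delta> \<subseteq> S"
    and W': "\<And>t. \<bar>t\<bar> < \<delta> \<Longrightarrow> ((\<lambda>s. W (z + of_real s * v)) has_real_derivative W' t) (at t)"
    and W'': "(W' has_real_derivative W'') (at 0)"
    and max: "\<And>y. y \<in> ball z \<delta> \<Longrightarrow> u y - W y \<le> u z - W z"
  shows "dirderiv v (dirderiv v u) z \<le> W''"
proof -
  have line: "z + of_real t * v \<in> ball z \<delta>" if "\<bar>t\<bar> < \<delta>" for t
    using v that by (auto simp: dist_norm norm_mult)
  have u': "((\<lambda>s. u (z + of_real s * v)) has_real_derivative dirderiv v u (z + of_real t * v)) (at t)"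
    if "\<bar>t\<bar> < \<delta>" for t
    using u v line[OF that] ball unfolding C2_on_def
    by (intro dirderiv_has_real_derivative_line) blast
  have "z \<in> S"
    using ball \<open>0 < \<delta>\<close> by auto
  then have "(\<lambda>s. dirderiv v u (z + of_real s * v)) differentiable (at 0)"
    using u v unfolding C2_on_def by blast
  then have u'': "((\<lambda>t. dirderiv v u (z + of_real t * v)) has_real_derivative
      dirderiv v (dirderiv v u) z) (at 0)"
    using dirderiv_has_real_derivative_line[of "dirderiv v u" z 0 v] by simp
  have "dirderiv v (dirderiv v u) z - W'' \<le> 0"
  proof (rule deriv2_nonpos_at_local_max[OF \<open>0 < \<delta>\<close>])
    show "((\<lambda>s. u (z + of_real s * v) - W (z + of_real s * v)) has_real_derivative
        dirderiv v u (z + of_real t * v) - W' t) (at t)" if "\<bar>t - 0\<bar> < \<delta>" for t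
      using u' W' that by (auto intro: DERIV_diff)
    show "((\<lambda>t. dirderiv v u (z + of_real t * v) - W' t) has_real_derivative
        dirderiv v (dirderiv v u) z - W'') (at 0)"
      using u'' W'' by (rule DERIV_diff)
    show "u (z + of_real t * v) - W (z + of_real t * v)
        \<le> u (z + of_real 0 * v) - W (z + of_real 0 * v)" if "\<bar>t - 0\<bar> < \<delta>" for t
      using max line that by simp
  qed
  then show ?thesis by simp
qed

definition barrier :: "real \<Rightarrow> complex \<Rightarrow> real" where
  "barrier R z = 24 * R\<^sup>2 / (R\<^sup>2 - (norm z)\<^sup>2)\<^sup>2"

lemma barrier_pos:
  assumes "norm z < R"
  shows "0 < barrier R z"
proof -
  have "0 < R"
    using assms norm_ge_zero[of z] by linarith
  then show ?thesis
    unfolding barrier_def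
    by (intro divide_pos_pos zero_less_power norm_less_imp_square_diff_pos[OF assms]) simp
qed

lemma barrier_line_has_derivative:
  fixes z v :: complex
  assumes v: "norm v = 1" and "norm (z + of_real t * v) < R"
  shows "((\<lambda>s. barrier R (z + of_real s * v)) has_real_derivative
           96 * R\<^sup>2 * (z \<bullet> v + t) / (R\<^sup>2 - (norm (z + of_real t * v))\<^sup>2) ^ 3) (at t)"
proof -
  define c where "c = z \<bullet> v"
  define b where "b = R\<^sup>2 - (norm z)\<^sup>2 + c\<^sup>2"
  have q: "R\<^sup>2 - (norm (z + of_real s * v))\<^sup>2 = b - (c + s)\<^sup>2" for s
    using norm_add_scaled_unit_square[OF v, of z s] by (simp add: b_def c_def power2_eq_square algebra_simps)
  have q': "((\<lambda>s. b - (c + s)\<^sup>2) has_real_derivative - 2 * (c + t)) (at t)"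
    by (auto intro!: derivative_eq_intros)
  have "0 < b - (c + t)\<^sup>2"
    using norm_less_imp_square_diff_pos[OF assms(2)] q[of t] by simp
  then have "((\<lambda>s. 24 * R\<^sup>2 / (b - (c + s)\<^sup>2)\<^sup>2) has_real_derivative
      96 * R\<^sup>2 * (c + t) / (b - (c + t)\<^sup>2) ^ 3) (at t)"
    by (intro DERIV_cong[OF DERIV_const_divide_square[OF q']]) (simp_all add: algebra_simps)
  then show ?thesis
    by (simp add: barrier_def q c_def)
qed

lemma barrier_line_deriv_has_derivative:
  fixes z v :: complex
  assumes v: "norm v = 1" and "norm z < R"
  shows "((\<lambda>t. 96 * R\<^sup>2 * (z \<bullet> v + t) / (R\<^sup>2 - (norm (z + of_real t * v))\<^sup>2) ^ 3)
           has_real_derivative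
           96 * R\<^sup>2 * (R\<^sup>2 - (norm z)\<^sup>2 + 6 * (z \<bullet> v)\<^sup>2) / (R\<^sup>2 - (norm z)\<^sup>2) ^ 4) (at 0)"
proof -
  define c where "c = z \<bullet> v"
  define b where "b = R\<^sup>2 - (norm z)\<^sup>2 + c\<^sup>2"
  have q: "R\<^sup>2 - (norm (z + of_real s * v))\<^sup>2 = b - (c + s)\<^sup>2" for s
    using norm_add_scaled_unit_square[OF v, of z s] by (simp add: b_def c_def power2_eq_square algebra_simps)
  have p': "((\<lambda>s. 96 * R\<^sup>2 * (c + s)) has_real_derivative 96 * R\<^sup>2) (at 0)"
    by (auto intro!: derivative_eq_intros)
  have q': "((\<lambda>s. b - (c + s)\<^sup>2) has_real_derivative - 2 * (c + 0)) (at 0)"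
    by (auto intro!: derivative_eq_intros)
  have b: "b - (c + 0)\<^sup>2 = R\<^sup>2 - (norm z)\<^sup>2"
    by (simp add: b_def)
  have "((\<lambda>s. 96 * R\<^sup>2 * (c + s) / (b - (c + s)\<^sup>2) ^ 3) has_real_derivative
      96 * R\<^sup>2 * (R\<^sup>2 - (norm z)\<^sup>2 + 6 * c\<^sup>2) / (R\<^sup>2 - (norm z)\<^sup>2) ^ 4) (at 0)"
  proof (rule DERIV_cong[OF DERIV_divide_cube[OF p' q']])
    show "b - (c + 0)\<^sup>2 \<noteq> 0"
      using norm_less_imp_square_diff_pos[OF assms(2)] b by simp
    show "(96 * R\<^sup>2 * (b - (c + 0)\<^sup>2) - 3 * (96 * R\<^sup>2 * (c + 0)) * (- 2 * (c + 0)))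
        / (b - (c + 0)\<^sup>2) ^ 4
        = 96 * R\<^sup>2 * (R\<^sup>2 - (norm z)\<^sup>2 + 6 * c\<^sup>2) / (R\<^sup>2 - (norm z)\<^sup>2) ^ 4"
      unfolding b by (simp add: algebra_simps power2_eq_square)
  qed
  then show ?thesis
    by (simp add: q c_def)
qed

lemma barrier_second_derivatives_le_square:
  assumes "norm z < R"
  shows "96 * R\<^sup>2 * (R\<^sup>2 - (norm z)\<^sup>2 + 6 * (Re z)\<^sup>2) / (R\<^sup>2 - (norm z)\<^sup>2) ^ 4
       + 96 * R\<^sup>2 * (R\<^sup>2 - (norm z)\<^sup>2 + 6 * (Im z)\<^sup>2) / (R\<^sup>2 - (norm z)\<^sup>2) ^ 4
       \<le> (barrier R z)\<^sup>2"
proof -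
  define q where "q = R\<^sup>2 - (norm z)\<^sup>2"
  have "0 < q"
    using norm_less_imp_square_diff_pos[OF assms] by (simp add: q_def)
  have "96 * R\<^sup>2 * (q + 6 * (Re z)\<^sup>2) + 96 * R\<^sup>2 * (q + 6 * (Im z)\<^sup>2)
      = (24 * R\<^sup>2)\<^sup>2 - 384 * R\<^sup>2 * q"
    unfolding q_def cmod_power2 by (simp add: power2_eq_square algebra_simps)
  also have "\<dots> \<le> (24 * R\<^sup>2)\<^sup>2"
    using \<open>0 < q\<close> by simp
  finally have "(96 * R\<^sup>2 * (q + 6 * (Re z)\<^sup>2) + 96 * R\<^sup>2 * (q + 6 * (Im z)\<^sup>2)) / q ^ 4
      \<le> (24 * R\<^sup>2)\<^sup>2 / q ^ 4"
    by (rule divide_right_mono) (use \<open>0 < q\<close> in simp)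
  also have "(24 * R\<^sup>2)\<^sup>2 / q ^ 4 = (barrier R z)\<^sup>2"
    by (simp add: barrier_def q_def[symmetric] power_divide flip: power_mult)
  finally show ?thesis
    by (simp add: q_def add_divide_distrib)
qed

lemma barrier_large_near_boundary:
  assumes "0 < R" "0 < M"
  obtains \<rho> where "0 \<le> \<rho>" "\<rho> < R" "\<And>z. \<rho> < norm z \<Longrightarrow> norm z < R \<Longrightarrow> M \<le> barrier R z"
proof
  define e where "e = min (R\<^sup>2) (sqrt (24 * R\<^sup>2 / M))"
  have e: "0 < e" "e \<le> R\<^sup>2"
    using assms by (auto simp: e_def)
  have "e\<^sup>2 \<le> (sqrt (24 * R\<^sup>2 / M))\<^sup>2"
    using e by (intro power_mono) (auto simp: e_def)
  also have "\<dots> = 24 * R\<^sup>2 / M"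
    using assms by simp
  finally have e2: "e\<^sup>2 \<le> 24 * R\<^sup>2 / M" .
  show "0 \<le> sqrt (R\<^sup>2 - e)"
    using e by simp
  show "sqrt (R\<^sup>2 - e) < R"
    using e assms real_sqrt_less_mono[of "R\<^sup>2 - e" "R\<^sup>2"] by simp
  show "M \<le> barrier R z" if "sqrt (R\<^sup>2 - e) < norm z" "norm z < R" for z
  proof -
    define q where "q = R\<^sup>2 - (norm z)\<^sup>2"
    have "0 < q"
      using norm_less_imp_square_diff_pos[OF that(2)] by (simp add: q_def)
    have "R\<^sup>2 - e = (sqrt (R\<^sup>2 - e))\<^sup>2"
      using e by simp
    also have "\<dots> < (norm z)\<^sup>2"
      using that(1) e by (intro power_strict_mono) auto
    finally have "q \<le> e"
      by (simp add: q_def)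
    then have "q\<^sup>2 \<le> e\<^sup>2"
      using \<open>0 < q\<close> by (intro power_mono) auto
    then have "q\<^sup>2 \<le> 24 * R\<^sup>2 / M"
      using e2 by linarith
    then have "M * q\<^sup>2 \<le> 24 * R\<^sup>2"
      using \<open>0 < M\<close> by (simp add: pos_le_divide_eq mult.commute)
    then show ?thesis
      using \<open>0 < q\<close> by (simp add: barrier_def q_def[symmetric] pos_le_divide_eq)
  qed
qed

lemma exists_interior_max_sub_barrier:
  fixes u :: "complex \<Rightarrow> real"
  assumes "0 < R" and u: "continuous_on (cball 0 R) u" and above: "barrier R 0 < u 0"
  obtains z0 where "norm z0 < R" "\<And>z. z \<in> ball 0 R \<Longrightarrow> u z - barrier R z \<le> u z0 - barrier R z0"
proof -
  have "cball 0 R \<noteq> {}"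
    using \<open>0 < R\<close> by simp
  then obtain zM where zM: "\<And>z. z \<in> cball 0 R \<Longrightarrow> u z \<le> u zM"
    using continuous_attains_sup[OF compact_cball _ u] by blast
  have "0 < u zM"
    using zM[of 0] above barrier_pos[of 0 R] \<open>0 < R\<close> by simp
  then obtain \<rho> where \<rho>: "0 \<le> \<rho>" "\<rho> < R" "\<And>z. \<rho> < norm z \<Longrightarrow> norm z < R \<Longrightarrow> u zM \<le> barrier R z"
    using barrier_large_near_boundary \<open>0 < R\<close> by blast
  have "continuous_on (cball 0 \<rho>) (\<lambda>z. u z - barrier R z)"
  proof (intro continuous_intros)
    show "continuous_on (cball 0 \<rho>) u"
      using u \<rho> by (auto elim: continuous_on_subset)
    have "\<forall>z\<in>cball 0 \<rho>. (R\<^sup>2 - (norm z)\<^sup>2)\<^sup>2 \<noteq> 0"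
      using \<rho> norm_less_imp_square_diff_pos[of _ R] by force
    then show "continuous_on (cball 0 \<rho>) (barrier R)"
      unfolding barrier_def by (intro continuous_intros)
  qed
  then obtain z0 where "z0 \<in> cball 0 \<rho>"
    and max: "\<And>z. z \<in> ball 0 R \<Longrightarrow> u z - barrier R z \<le> u z0 - barrier R z0"
  proof (rule continuous_attains_sup_ball[OF _ \<rho>(1)])
    show "u z - barrier R z \<le> u 0 - barrier R 0" if "z \<in> ball 0 R" "\<rho> < dist 0 z" for z
      using zM[of z] \<rho>(3)[of z] that above by simp
  qed auto
  then have "norm z0 < R"
    using \<rho> by simp
  with max that show ?thesis
    by blast
qed

lemma laplacian_le_barrier_square_at_max:
  assumes u: "C2_on S u" and "ball 0 R \<subseteq> S" and z0: "norm z0 < R"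
    and max: "\<And>z. z \<in> ball 0 R \<Longrightarrow> u z - barrier R z \<le> u z0 - barrier R z0"
  shows "laplacian u z0 \<le> (barrier R z0)\<^sup>2"
proof -
  define \<delta> where "\<delta> = R - norm z0"
  have "0 < \<delta>"
    using z0 by (simp add: \<delta>_def)
  have ball: "ball z0 \<delta> \<subseteq> ball 0 R"
    by (simp add: ball_subset_ball_iff \<delta>_def)
  define q where "q = R\<^sup>2 - (norm z0)\<^sup>2"
  have second: "dirderiv v (dirderiv v u) z0 \<le> 96 * R\<^sup>2 * (q + 6 * (z0 \<bullet> v)\<^sup>2) / q ^ 4"
    if v: "v \<in> {1, \<i>}" for v
  proof (rule C2_on_dirderiv2_le_at_local_max[OF u v \<open>0 < \<delta>\<close>])
    have "norm v = 1"
      using v by auto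
    show "ball z0 \<delta> \<subseteq> S"
      using ball \<open>ball 0 R \<subseteq> S\<close> by auto
    show "((\<lambda>s. barrier R (z0 + of_real s * v)) has_real_derivative
        96 * R\<^sup>2 * (z0 \<bullet> v + t) / (R\<^sup>2 - (norm (z0 + of_real t * v))\<^sup>2) ^ 3) (at t)"
      if "\<bar>t\<bar> < \<delta>" for t
      using barrier_line_has_derivative[OF \<open>norm v = 1\<close>] ball that \<open>norm v = 1\<close>
      by (force simp: dist_norm norm_mult)
    show "((\<lambda>t. 96 * R\<^sup>2 * (z0 \<bullet> v + t) / (R\<^sup>2 - (norm (z0 + of_real t * v))\<^sup>2) ^ 3)
        has_real_derivative 96 * R\<^sup>2 * (q + 6 * (z0 \<bullet> v)\<^sup>2) / q ^ 4) (at 0)"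
      using barrier_line_deriv_has_derivative[OF \<open>norm v = 1\<close> z0] by (simp add: q_def)
    show "u y - barrier R y \<le> u z0 - barrier R z0" if "y \<in> ball z0 \<delta>" for y
      using max ball that by blast
  qed
  have "laplacian u z0 \<le> 96 * R\<^sup>2 * (q + 6 * (Re z0)\<^sup>2) / q ^ 4 + 96 * R\<^sup>2 * (q + 6 * (Im z0)\<^sup>2) / q ^ 4"
    unfolding laplacian_def using second[of 1] second[of \<i>] by simp
  also have "\<dots> \<le> (barrier R z0)\<^sup>2"
    using barrier_second_derivatives_le_square[OF z0] by (simp add: q_def)
  finally show ?thesis .
qed

lemma laplacian_ge_square_imp_center_le_smaller_radius:
  fixes u :: "complex \<Rightarrow> real"
  assumes "0 < R" "R < r" and u: "C2_on (ball 0 r) u"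
    and sub: "\<And>z. z \<in> ball 0 r \<Longrightarrow> 0 < u z \<Longrightarrow> (u z)\<^sup>2 \<le> laplacian u z"
  shows "u 0 \<le> 24 / R\<^sup>2"
proof (rule ccontr)
  assume "\<not> u 0 \<le> 24 / R\<^sup>2"
  then have above: "barrier R 0 < u 0"
    using \<open>0 < R\<close> by (simp add: barrier_def power2_eq_square)
  have "continuous_on (cball 0 R) u"
    using u \<open>R < r\<close> unfolding C2_on_def by (auto elim: continuous_on_subset)
  then obtain z0 where z0: "norm z0 < R"
    and max: "\<And>z. z \<in> ball 0 R \<Longrightarrow> u z - barrier R z \<le> u z0 - barrier R z0"
    using exists_interior_max_sub_barrier \<open>0 < R\<close> above by blast
  have "barrier R z0 < u z0"
    using max[of 0] above \<open>0 < R\<close> by simp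
  then have "(barrier R z0)\<^sup>2 < (u z0)\<^sup>2"
    using barrier_pos[OF z0] by (simp add: power_strict_mono)
  also have "\<dots> \<le> laplacian u z0"
    using sub \<open>barrier R z0 < u z0\<close> barrier_pos[OF z0] z0 \<open>R < r\<close> by simp
  also have "\<dots> \<le> (barrier R z0)\<^sup>2"
    by (rule laplacian_le_barrier_square_at_max[OF u _ z0 max]) (use \<open>R < r\<close> in auto)
  finally show False
    by simp
qed

lemma laplacian_ge_square_imp_center_le:
  fixes u :: "complex \<Rightarrow> real"
  assumes "0 < r" and u: "C2_on (ball 0 r) u"
    and sub: "\<And>z. z \<in> ball 0 r \<Longrightarrow> 0 < u z \<Longrightarrow> (u z)\<^sup>2 \<le> laplacian u z"
  shows "u 0 \<le> 24 / r\<^sup>2"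
proof (rule tendsto_lowerbound)
  show "((\<lambda>R. 24 / R\<^sup>2) \<longlongrightarrow> 24 / r\<^sup>2) (at_left r)"
    using \<open>0 < r\<close> by (intro tendsto_intros) auto
  show "\<forall>\<^sub>F R in at_left r. u 0 \<le> 24 / R\<^sup>2"
    using eventually_at_left_real[OF \<open>0 < r\<close>]
    by eventually_elim (auto intro: laplacian_ge_square_imp_center_le_smaller_radius[OF _ _ u sub])
qed simp

theorem proposition2p12:
  fixes k :: nat
  assumes "k \<ge> 1"
  shows "\<exists>C>0. \<forall>(r::real) (u::complex \<Rightarrow> real).
           r \<ge> 1 \<longrightarrow> C2_on (ball 0 r) u \<longrightarrow> (\<forall>z\<in>ball 0 r. u z \<ge> 0) \<longrightarrow>
           (\<forall>z\<in>ball 0 r. laplacian u z = 2 * (exp (u z) - exp ((1 - real k) * u z))) \<longrightarrow>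
           u 0 \<le> C / r\<^sup>2"
proof (intro exI[of _ 24] conjI allI impI)
  fix r :: real and u :: "complex \<Rightarrow> real"
  assume "r \<ge> 1" and u: "C2_on (ball 0 r) u" and "\<forall>z\<in>ball 0 r. u z \<ge> 0"
    and pde: "\<forall>z\<in>ball 0 r. laplacian u z = 2 * (exp (u z) - exp ((1 - real k) * u z))"
  have "(u z)\<^sup>2 \<le> laplacian u z" if "z \<in> ball 0 r" "0 < u z" for z
    using pde that square_le_exp_diff[of "u z" "1 - real k"] assms by simp
  then show "u 0 \<le> 24 / r\<^sup>2"
    using laplacian_ge_square_imp_center_le[OF _ u] \<open>r \<ge> 1\<close> by simp
qed simp

end
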